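(* Let $c_r>0$ and $c_e>0$ be constants and let $\mu$ be a finite (nonnegative) measure on $\mathbb{R}$, where for a set $S$ of attribute values $\mu(S)$ is the (estimated) number of tuples whose value of a fixed indexed attribute $a$ lies in $S$. Consider two range conditions (candidate guards) on $a$, namely $o_x: a\in[v^x_1,v^x_2]$ and $o_y: a\in[v^y_1,v^y_2]$, coming from two different policies $P_x$ and $P_y$. Let $o_{x\oplus y}: a\in[\min(v^x_1,v^y_1),\max(v^x_2,v^y_2)]$ be their merge. Define the costs $\mathrm{cost}(P_x)=\mu([v^x_1,v^x_2])\,(c_r+c_e)$, $\mathrm{cost}(P_y)=\mu([v^y_1,v^y_2])\,(c_r+c_e)$, and $\mathrm{cost}(P_x\oplus P_y)=\mu([\min(v^x_1,v^y_1),\max(v^x_2,v^y_2)])\,(c_r+2c_e)$, and say that merging $o_x$ and $o_y$ is beneficial if $\mathrm{cost}(P_x\oplus P_y)<\mathrm{cost}(P_x)+\mathrm{cost}(P_y)$. If $[v^x_1,v^x_2]\cap[v^y_1,v^y_2]=\emptyset$, then merging $o_x$ and $o_y$ is not beneficial.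
   Context: Setting: access-control policies over a database relation are evaluated via guarded expressions. A guarded expression consists of a guard (a simple condition on an indexed attribute) together with a set (partition) of policies; its cost is modeled as $\mathrm{Card}(\text{guard})\cdot(c_r + |\text{partition}|\cdot c_e)$, where $\mathrm{Card}$ is the estimated number of tuples satisfying the guard, $c_r$ is the cost of reading one tuple and $c_e$ the cost of evaluating one policy's conditions on one tuple. A guarded expression containing a single policy $P_l$ with guard $o$ thus costs $\mathrm{Card}(o)(c_r+c_e)$, and a merged guard covering two policies costs $\mathrm{Card}(\text{merged guard})(c_r+2c_e)$. Here $\mathrm{Card}$ is modeled by the measure $\mu$. *)

theory Defs
  imports "HOL-Probability.Probability"
begin

definition single_cost :: "real measure \<Rightarrow> real \<Rightarrow> real \<Rightarrow> real \<Rightarrow> real \<Rightarrow> real" where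
  "single_cost \<mu> c_r c_e v1 v2 = measure \<mu> {v1..v2} * (c_r + c_e)"

definition merged_cost :: "real measure \<Rightarrow> real \<Rightarrow> real \<Rightarrow> real \<Rightarrow> real \<Rightarrow> real \<Rightarrow> real \<Rightarrow> real" where
  "merged_cost \<mu> c_r c_e vx1 vx2 vy1 vy2 =
     measure \<mu> {min vx1 vy1 .. max vx2 vy2} * (c_r + 2 * c_e)"

definition merge_beneficial :: "real measure \<Rightarrow> real \<Rightarrow> real \<Rightarrow> real \<Rightarrow> real \<Rightarrow> real \<Rightarrow> real \<Rightarrow> bool" where
  "merge_beneficial \<mu> c_r c_e vx1 vx2 vy1 vy2 \<longleftrightarrow>
     merged_cost \<mu> c_r c_e vx1 vx2 vy1 vy2
       < single_cost \<mu> c_r c_e vx1 vx2 + single_cost \<mu> c_r c_e vy1 vy2"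

end

theory Submission
  imports Defs
begin

text \<open>Disjoint ranges have additive measure, and their union lies inside the merged range, so
  the merged range is at least as large as both ranges together. Since the merged guard also
  evaluates one more policy per tuple, its cost can only be larger.\<close>

lemma (in finite_measure) measure_add_le_if_disjoint_subset:
  assumes "A \<in> sets M" "B \<in> sets M" "C \<in> sets M"
    and "A \<inter> B = {}" "A \<union> B \<subseteq> C"
  shows "measure M A + measure M B \<le> measure M C"
proof -
  have "measure M A + measure M B = measure M (A \<union> B)"
    using finite_measure_Union assms(1,2,4) by simp
  also have "\<dots> \<le> measure M C"
    using finite_measure_mono assms(3,5) by blast
  finally show ?thesis .
qed

lemma single_costs_le_merged_cost:
  assumes "measure \<mu> {vx1..vx2} + measure \<mu> {vy1..vy2} \<le> measure \<mu> {min vx1 vy1..max vx2 vy2}"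
    and "0 \<le> c_r + c_e" and "0 \<le> c_e"
  shows "single_cost \<mu> c_r c_e vx1 vx2 + single_cost \<mu> c_r c_e vy1 vy2
           \<le> merged_cost \<mu> c_r c_e vx1 vx2 vy1 vy2"
proof -
  let ?m = "measure \<mu> {min vx1 vy1..max vx2 vy2}"
  have "single_cost \<mu> c_r c_e vx1 vx2 + single_cost \<mu> c_r c_e vy1 vy2
          = (measure \<mu> {vx1..vx2} + measure \<mu> {vy1..vy2}) * (c_r + c_e)"
    by (simp add: single_cost_def distrib_right)
  also have "\<dots> \<le> ?m * (c_r + c_e)"
    using assms(1,2) by (rule mult_right_mono)
  also have "\<dots> \<le> ?m * (c_r + 2 * c_e)"
    using assms(3) by (intro mult_left_mono) auto
  finally show ?thesis
    by (simp add: merged_cost_def)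
qed

theorem theorem1:
  fixes \<mu> :: "real measure" and c_r c_e vx1 vx2 vy1 vy2 :: real
  assumes "c_r > 0" and "c_e > 0"
    and "finite_measure \<mu>" and "sets \<mu> = sets borel"
    and "{vx1..vx2} \<inter> {vy1..vy2} = {}"
  shows "\<not> merge_beneficial \<mu> c_r c_e vx1 vx2 vy1 vy2"
proof -
  have "{vx1..vx2} \<union> {vy1..vy2} \<subseteq> {min vx1 vy1..max vx2 vy2}"
    by auto
  then have "measure \<mu> {vx1..vx2} + measure \<mu> {vy1..vy2} \<le> measure \<mu> {min vx1 vy1..max vx2 vy2}"
    using finite_measure.measure_add_le_if_disjoint_subset[OF assms(3)] assms(4,5) by simp
  then have "single_cost \<mu> c_r c_e vx1 vx2 + single_cost \<mu> c_r c_e vy1 vy2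
               \<le> merged_cost \<mu> c_r c_e vx1 vx2 vy1 vy2"
    using assms(1,2) by (intro single_costs_le_merged_cost) auto
  then show ?thesis
    unfolding merge_beneficial_def by simp
qed

end
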